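(* Let $P\subset\mathbb{R}^d$ with $|P|=n$, let $D=\operatorname{diam}P$ and let $r\in[n]$. Then there is a point $q\in\mathbb{R}^d$ such that the closed ball $B\!\left(q,\frac{3.5D}{\sqrt r}\right)$ intersects the convex hull of at least $r^{-r}\binom nr$ of the $r$-element subsets of $P$.
   Context: $B(q,\rho)$ is the closed Euclidean ball of centre $q$ and radius $\rho$; $\operatorname{diam}$ is the Euclidean diameter. *)

theory Defs
  imports "HOL-Analysis.Analysis"
begin

end

theory Submission
  imports Defs
begin

(* The centroid of an r-subset S of P lies in the convex hull of S. Averaged over all r-subsets,
   the squared distance of these centroids from the centroid c of P is (n - r) / (r (n - 1)) times
   the average squared distance of the points of P from c, hence at most D^2 / r. By Markov's
   inequality at most 4/49 of the r-subsets have their centroid outside B(c, 3.5 D / sqrt r), and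
   45/49 >= r^(-r) once r >= 2. If the radius is at least D (in particular for r = 1), every
   convex hull meets the ball centred at any point of P. *)

definition centroid :: "'a::real_vector set \<Rightarrow> 'a" where
  "centroid S = (1 / real (card S)) *\<^sub>R (\<Sum>S)"

lemma centroid_in_convex_hull:
  assumes "finite S" "S \<noteq> {}"
  shows "centroid S \<in> convex hull S"
proof -
  have "(\<Sum>p\<in>S. (1 / real (card S)) *\<^sub>R p) \<in> convex hull S"
    using assms by (intro convex_sum convex_convex_hull) (auto intro: hull_inc)
  then show ?thesis
    by (simp add: centroid_def scaleR_sum_right)
qed

lemma sum_diff_centroid:
  assumes "finite P"
  shows "(\<Sum>p\<in>P. p - centroid P) = 0"
  using assms by (cases "P = {}") (simp_all add: sum_subtractf sum_constant_scaleR centroid_def)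

lemma dist_centroid_le_diameter:
  fixes P :: "'a::real_normed_vector set"
  assumes "finite P" "p \<in> P"
  shows "dist p (centroid P) \<le> diameter P"
proof -
  have "P \<subseteq> cball p (diameter P)"
    using assms diameter_bounded_bound[OF finite_imp_bounded] by fastforce
  then have "convex hull P \<subseteq> cball p (diameter P)"
    by (intro hull_minimal convex_cball)
  moreover have "centroid P \<in> convex hull P"
    using assms by (intro centroid_in_convex_hull) auto
  ultimately show ?thesis
    by auto
qed

lemma card_gt_mult_le_sum:
  fixes f :: "'b \<Rightarrow> real"
  assumes "finite A" "\<And>a. a \<in> A \<Longrightarrow> 0 \<le> f a"
  shows "real (card {a\<in>A. t < f a}) * t \<le> sum f A"
proof -
  have "real (card {a\<in>A. t < f a}) * t = (\<Sum>a\<in>{a\<in>A. t < f a}. t)"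
    by simp
  also have "\<dots> \<le> (\<Sum>a\<in>{a\<in>A. t < f a}. f a)"
    by (intro sum_mono) simp
  also have "\<dots> \<le> sum f A"
    using assms by (intro sum_mono2) auto
  finally show ?thesis .
qed

lemma card_subsets_containing:
  assumes "finite P" "A \<subseteq> P" "card A \<le> r"
  shows "card {S. S \<subseteq> P \<and> card S = r \<and> A \<subseteq> S} = (card P - card A) choose (r - card A)"
proof -
  have fin_A: "finite A"
    using assms finite_subset by blast
  have "bij_betw (\<lambda>T. T \<union> A) {T. T \<subseteq> P - A \<and> card T = r - card A}
      {S. S \<subseteq> P \<and> card S = r \<and> A \<subseteq> S}"
  proof (rule bij_betw_byWitness[where f' = "\<lambda>S. S - A"])
    show "(\<lambda>T. T \<union> A) ` {T. T \<subseteq> P - A \<and> card T = r - card A}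
        \<subseteq> {S. S \<subseteq> P \<and> card S = r \<and> A \<subseteq> S}"
    proof clarify
      fix T assume T: "T \<subseteq> P - A" "card T = r - card A"
      then have "finite T"
        using assms(1) finite_subset by blast
      then have "card (T \<union> A) = card T + card A"
        using T fin_A by (subst card_Un_disjoint) auto
      then show "T \<union> A \<subseteq> P \<and> card (T \<union> A) = r \<and> A \<subseteq> T \<union> A"
        using T assms by auto
    qed
    show "(\<lambda>S. S - A) ` {S. S \<subseteq> P \<and> card S = r \<and> A \<subseteq> S}
        \<subseteq> {T. T \<subseteq> P - A \<and> card T = r - card A}"
      using assms fin_A finite_subset by (auto simp: card_Diff_subset)
  qed auto
  then have "card {S. S \<subseteq> P \<and> card S = r \<and> A \<subseteq> S} = card {T. T \<subseteq> P - A \<and> card T = r - card A}"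
    by (simp add: bij_betw_same_card)
  also have "\<dots> = (card P - card A) choose (r - card A)"
    using assms fin_A by (simp add: n_subsets card_Diff_subset)
  finally show ?thesis .
qed

lemma sum_subsets_double_sum:
  fixes f :: "'b \<Rightarrow> 'b \<Rightarrow> real"
  assumes "finite P"
  shows "(\<Sum>S | S \<subseteq> P \<and> card S = r. \<Sum>p\<in>S. \<Sum>q\<in>S. f p q)
    = (\<Sum>p\<in>P. \<Sum>q\<in>P. f p q * real (card {S. S \<subseteq> P \<and> card S = r \<and> {p, q} \<subseteq> S}))"
proof -
  let ?U = "{S. S \<subseteq> P \<and> card S = r}"
  have fin_U: "finite ?U"
    using assms by simp
  have "(\<Sum>S\<in>?U. \<Sum>p\<in>S. \<Sum>q\<in>S. f p q)
      = (\<Sum>S\<in>?U. \<Sum>p\<in>P. \<Sum>q\<in>P. if {p, q} \<subseteq> S then f p q else 0)"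
  proof (rule sum.cong[OF refl])
    fix S assume "S \<in> ?U"
    then have "S \<subseteq> P" by simp
    have "(\<Sum>p\<in>S. \<Sum>q\<in>S. f p q)
        = (\<Sum>p\<in>P. if p \<in> S then (\<Sum>q\<in>P. if q \<in> S then f p q else 0) else 0)"
      using assms \<open>S \<subseteq> P\<close> by (simp add: sum.inter_filter[symmetric] Int_absorb1
          Collect_conj_eq[symmetric] Int_def[symmetric] inf.absorb2 conj_commute)
    also have "\<dots> = (\<Sum>p\<in>P. \<Sum>q\<in>P. if {p, q} \<subseteq> S then f p q else 0)"
      by (rule sum.cong[OF refl]) (auto intro: sum.cong)
    finally show "(\<Sum>p\<in>S. \<Sum>q\<in>S. f p q) = (\<Sum>p\<in>P. \<Sum>q\<in>P. if {p, q} \<subseteq> S then f p q else 0)" .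
  qed
  also have "\<dots> = (\<Sum>p\<in>P. \<Sum>q\<in>P. \<Sum>S\<in>?U. if {p, q} \<subseteq> S then f p q else 0)"
    by (simp add: sum.swap[of _ ?U])
  also have "\<dots> = (\<Sum>p\<in>P. \<Sum>q\<in>P. f p q * real (card {S. S \<subseteq> P \<and> card S = r \<and> {p, q} \<subseteq> S}))"
  proof (intro sum.cong refl)
    fix p q
    have "(\<Sum>S\<in>?U. if {p, q} \<subseteq> S then f p q else 0) = (\<Sum>S\<in>{S\<in>?U. {p, q} \<subseteq> S}. f p q)"
      by (rule sum.inter_filter[symmetric, OF fin_U])
    also have "{S\<in>?U. {p, q} \<subseteq> S} = {S. S \<subseteq> P \<and> card S = r \<and> {p, q} \<subseteq> S}"
      by auto
    finally show "(\<Sum>S\<in>?U. if {p, q} \<subseteq> S then f p q else 0)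
        = f p q * real (card {S. S \<subseteq> P \<and> card S = r \<and> {p, q} \<subseteq> S})"
      by (simp only: sum_constant mult.commute)
  qed
  finally show ?thesis .
qed

lemma sum_subsets_norm_sum_sq:
  fixes x :: "'b \<Rightarrow> 'a::real_inner"
  assumes fin_P: "finite P" and sum_x: "sum x P = 0" and "2 \<le> r"
  shows "(\<Sum>S | S \<subseteq> P \<and> card S = r. (norm (\<Sum>p\<in>S. x p))\<^sup>2)
    = (real ((card P - 1) choose (r - 1)) - real ((card P - 2) choose (r - 2))) * (\<Sum>p\<in>P. (norm (x p))\<^sup>2)"
proof -
  define a where "a = real ((card P - 1) choose (r - 1))"
  define b where "b = real ((card P - 2) choose (r - 2))"
  have count: "real (card {S. S \<subseteq> P \<and> card S = r \<and> {p, q} \<subseteq> S}) = (if p = q then a else b)"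
    if "p \<in> P" "q \<in> P" for p q
    using that \<open>2 \<le> r\<close> card_subsets_containing[OF fin_P, of "{p, q}" r]
    by (auto simp: a_def b_def numeral_2_eq_2)
  have "(\<Sum>S | S \<subseteq> P \<and> card S = r. (norm (\<Sum>p\<in>S. x p))\<^sup>2)
      = (\<Sum>S | S \<subseteq> P \<and> card S = r. \<Sum>p\<in>S. \<Sum>q\<in>S. x p \<bullet> x q)"
    by (simp add: power2_norm_eq_inner inner_sum_left inner_sum_right inner_commute)
  also have "\<dots> = (\<Sum>p\<in>P. \<Sum>q\<in>P. x p \<bullet> x q * real (card {S. S \<subseteq> P \<and> card S = r \<and> {p, q} \<subseteq> S}))"
    by (rule sum_subsets_double_sum[OF fin_P])
  also have "\<dots> = (\<Sum>p\<in>P. \<Sum>q\<in>P. b * (x p \<bullet> x q) + (if p = q then (a - b) * (x p \<bullet> x q) else 0))"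
  proof (intro sum.cong refl)
    fix p q assume "p \<in> P" "q \<in> P"
    then show "x p \<bullet> x q * real (card {S. S \<subseteq> P \<and> card S = r \<and> {p, q} \<subseteq> S})
        = b * (x p \<bullet> x q) + (if p = q then (a - b) * (x p \<bullet> x q) else 0)"
      unfolding count[OF \<open>p \<in> P\<close> \<open>q \<in> P\<close>] by (simp add: algebra_simps)
  qed
  also have "\<dots> = b * (\<Sum>p\<in>P. \<Sum>q\<in>P. x p \<bullet> x q) + (a - b) * (\<Sum>p\<in>P. x p \<bullet> x p)"
    using fin_P by (simp only: sum.distrib sum_distrib_left sum.delta) simp
  also have "(\<Sum>p\<in>P. \<Sum>q\<in>P. x p \<bullet> x q) = sum x P \<bullet> sum x P"
    unfolding inner_sum_left inner_sum_right by (rule sum.swap)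
  finally show ?thesis
    by (simp add: sum_x a_def b_def power2_norm_eq_inner)
qed

lemma sum_sq_dist_centroid_subsets_le:
  fixes P :: "'a::real_inner set"
  assumes fin_P: "finite P" and "2 \<le> r"
  shows "(\<Sum>S | S \<subseteq> P \<and> card S = r. (dist (centroid S) (centroid P))\<^sup>2)
    \<le> real (card P choose r) * (diameter P)\<^sup>2 / real r"
proof -
  let ?U = "{S. S \<subseteq> P \<and> card S = r}"
  define x where "x p = p - centroid P" for p
  define a where "a = real ((card P - 1) choose (r - 1))"
  have r_pos: "real r > 0"
    using \<open>2 \<le> r\<close> by simp
  have dist_eq: "(dist (centroid S) (centroid P))\<^sup>2 = (norm (\<Sum>p\<in>S. x p))\<^sup>2 / (real r)\<^sup>2"
    if "S \<in> ?U" for S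
  proof -
    have "centroid S - centroid P = (1 / real r) *\<^sub>R (\<Sum>p\<in>S. x p)"
      using that r_pos by (simp add: centroid_def x_def sum_subtractf scaleR_diff_right sum_constant_scaleR)
    then show ?thesis
      by (simp add: dist_norm power_divide)
  qed
  have n_a: "real (card P) * a = real r * real (card P choose r)"
    using times_binomial_minus1_eq[of r "card P"] r_pos unfolding a_def by (simp flip: of_nat_mult)
  have sum_norm_x: "(\<Sum>p\<in>P. (norm (x p))\<^sup>2) \<le> real (card P) * (diameter P)\<^sup>2"
  proof -
    have "(\<Sum>p\<in>P. (norm (x p))\<^sup>2) \<le> (\<Sum>p\<in>P. (diameter P)\<^sup>2)"
      using dist_centroid_le_diameter[OF fin_P]
      by (intro sum_mono power_mono) (auto simp: x_def dist_norm)
    then show ?thesis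
      by simp
  qed
  have "(\<Sum>S\<in>?U. (dist (centroid S) (centroid P))\<^sup>2) = (\<Sum>S\<in>?U. (norm (\<Sum>p\<in>S. x p))\<^sup>2) / (real r)\<^sup>2"
    by (simp add: dist_eq sum_divide_distrib)
  also have "\<dots> \<le> a * (\<Sum>p\<in>P. (norm (x p))\<^sup>2) / (real r)\<^sup>2"
    using sum_subsets_norm_sum_sq[OF fin_P sum_diff_centroid[OF fin_P] \<open>2 \<le> r\<close>]
    by (intro divide_right_mono) (auto simp: x_def a_def sum_nonneg mult_right_mono)
  also have "\<dots> \<le> a * (real (card P) * (diameter P)\<^sup>2) / (real r)\<^sup>2"
    using sum_norm_x by (intro divide_right_mono mult_left_mono) (auto simp: a_def)
  also have "\<dots> = real (card P choose r) * (diameter P)\<^sup>2 / real r"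
    using r_pos n_a by (simp add: field_simps power2_eq_square)
  finally show ?thesis .
qed

lemma card_subsets_centroid_far_le:
  fixes P :: "'a::real_inner set"
  assumes "finite P" "2 \<le> r" "0 \<le> \<rho>"
  shows "real (card {S. S \<subseteq> P \<and> card S = r \<and> \<rho> < dist (centroid S) (centroid P)}) * \<rho>\<^sup>2
    \<le> real (card P choose r) * (diameter P)\<^sup>2 / real r"
proof -
  let ?U = "{S. S \<subseteq> P \<and> card S = r}"
  have "{S. S \<subseteq> P \<and> card S = r \<and> \<rho> < dist (centroid S) (centroid P)}
      = {S\<in>?U. \<rho>\<^sup>2 < (dist (centroid S) (centroid P))\<^sup>2}"
    using \<open>0 \<le> \<rho>\<close> by (auto intro: power2_less_imp_less power_strict_mono)
  also have "real (card \<dots>) * \<rho>\<^sup>2 \<le> (\<Sum>S\<in>?U. (dist (centroid S) (centroid P))\<^sup>2)"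
    using \<open>finite P\<close> by (intro card_gt_mult_le_sum) auto
  finally show ?thesis
    using sum_sq_dist_centroid_subsets_le[OF assms(1,2)] by linarith
qed

lemma subsets_meet_cball_if_diameter_le:
  assumes "finite P" "p \<in> P" "diameter P \<le> \<rho>" "r \<noteq> 0"
  shows "{S. S \<subseteq> P \<and> card S = r \<and> convex hull S \<inter> cball p \<rho> \<noteq> {}} = {S. S \<subseteq> P \<and> card S = r}"
proof -
  have "convex hull S \<inter> cball p \<rho> \<noteq> {}" if "S \<subseteq> P" "card S = r" for S
  proof -
    have "S \<noteq> {}"
      using that \<open>r \<noteq> 0\<close> by auto
    then obtain s where "s \<in> S"
      by blast
    then have "dist p s \<le> \<rho>"
      using assms that diameter_bounded_bound[OF finite_imp_bounded] by (meson order_trans subsetD)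
    moreover have "s \<in> convex hull S"
      using \<open>s \<in> S\<close> by (rule hull_inc)
    ultimately show ?thesis
      by auto
  qed
  then show ?thesis
    by auto
qed

lemma card_subsets_meet_cball_centroid_ge:
  fixes P :: "'a::real_normed_vector set"
  assumes "finite P" "r \<noteq> 0"
  shows "real (card P choose r) - real (card {S. S \<subseteq> P \<and> card S = r \<and> \<rho> < dist (centroid S) (centroid P)})
    \<le> real (card {S. S \<subseteq> P \<and> card S = r \<and> convex hull S \<inter> cball (centroid P) \<rho> \<noteq> {}})"
proof -
  let ?U = "{S. S \<subseteq> P \<and> card S = r}"
  let ?far = "{S. S \<subseteq> P \<and> card S = r \<and> \<rho> < dist (centroid S) (centroid P)}"
  let ?hit = "{S. S \<subseteq> P \<and> card S = r \<and> convex hull S \<inter> cball (centroid P) \<rho> \<noteq> {}}"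
  have fin_U: "finite ?U"
    using assms by simp
  have fin_far: "finite ?far"
    using fin_U by (rule finite_subset[rotated]) auto
  have "?U - ?far \<subseteq> ?hit"
  proof
    fix S assume S: "S \<in> ?U - ?far"
    then have "finite S" "S \<noteq> {}"
      using assms finite_subset by fastforce+
    then have "centroid S \<in> convex hull S"
      by (rule centroid_in_convex_hull)
    then show "S \<in> ?hit"
      using S by (auto simp: dist_commute)
  qed
  then have "card (?U - ?far) \<le> card ?hit"
    using fin_U by (intro card_mono[OF finite_subset[OF _ fin_U]]) auto
  moreover have "card (?U - ?far) = card ?U - card ?far"
    using fin_far by (intro card_Diff_subset) auto
  moreover have "card ?far \<le> card ?U"
    using fin_U by (intro card_mono) auto
  ultimately show ?thesis
    using assms by (simp add: n_subsets)
qed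

lemma card_subsets_meet_cball_centroid_lower_bound:
  fixes P :: "'a::real_inner set"
  assumes "finite P" "2 \<le> r" "0 < \<rho>"
  shows "(1 - (diameter P)\<^sup>2 / (real r * \<rho>\<^sup>2)) * real (card P choose r)
    \<le> real (card {S. S \<subseteq> P \<and> card S = r \<and> convex hull S \<inter> cball (centroid P) \<rho> \<noteq> {}})"
proof -
  let ?far = "{S. S \<subseteq> P \<and> card S = r \<and> \<rho> < dist (centroid S) (centroid P)}"
  have "real (card ?far) * \<rho>\<^sup>2 \<le> real (card P choose r) * (diameter P)\<^sup>2 / real r"
    using card_subsets_centroid_far_le[OF assms(1,2)] \<open>0 < \<rho>\<close> by simp
  then have "real (card ?far) \<le> (diameter P)\<^sup>2 / (real r * \<rho>\<^sup>2) * real (card P choose r)"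
    using assms by (simp add: field_simps)
  then show ?thesis
    using card_subsets_meet_cball_centroid_ge[OF \<open>finite P\<close>, of r \<rho>] assms by (simp add: algebra_simps)
qed

theorem theorem7p2:
  fixes P :: "'a::euclidean_space set" and n r :: nat
  assumes "finite P" and "card P = n" and "1 \<le> r" and "r \<le> n"
  shows "\<exists>q::'a. real (card {S. S \<subseteq> P \<and> card S = r \<and>
             convex hull S \<inter> cball q (3.5 * diameter P / sqrt (real r)) \<noteq> {}})
           \<ge> real (n choose r) / real r ^ r"
proof -
  define \<rho> where "\<rho> = 3.5 * diameter P / sqrt (real r)"
  let ?hit = "\<lambda>q. {S. S \<subseteq> P \<and> card S = r \<and> convex hull S \<inter> cball q \<rho> \<noteq> {}}"
  have "0 \<le> diameter P"
    using \<open>finite P\<close> by (simp add: diameter_ge_0 finite_imp_bounded)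
  have "\<exists>q. real (n choose r) / real r ^ r \<le> real (card (?hit q))"
  proof (cases "diameter P \<le> \<rho>")
    case True
    obtain p where "p \<in> P"
      using assms by fastforce
    then have "card (?hit p) = n choose r"
      using subsets_meet_cball_if_diameter_le[OF \<open>finite P\<close> _ True] assms by (simp add: n_subsets)
    moreover have "real (n choose r) / real r ^ r \<le> real (n choose r) / 1"
      using \<open>1 \<le> r\<close> by (intro divide_left_mono) auto
    ultimately show ?thesis
      by (intro exI[of _ p]) simp
  next
    case False
    have "0 < diameter P"
      using False \<open>0 \<le> diameter P\<close> by (cases "diameter P = 0") (auto simp: \<rho>_def)
    moreover have "r \<noteq> 1"
      using False \<open>0 \<le> diameter P\<close> by (auto simp: \<rho>_def)
    ultimately have "2 \<le> r" "0 < \<rho>"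
      using \<open>1 \<le> r\<close> by (auto simp: \<rho>_def)
    have ratio: "(diameter P)\<^sup>2 / (real r * \<rho>\<^sup>2) = 4 / 49"
      using \<open>0 < diameter P\<close> \<open>2 \<le> r\<close> by (simp add: \<rho>_def power_divide power_mult_distrib)
    have "45 / 49 * real (n choose r) \<le> real (card (?hit (centroid P)))"
      using card_subsets_meet_cball_centroid_lower_bound[OF \<open>finite P\<close> \<open>2 \<le> r\<close> \<open>0 < \<rho>\<close>]
      unfolding ratio assms(2) by (simp add: algebra_simps)
    moreover have "real (n choose r) / real r ^ r \<le> real (n choose r) / 2"
    proof (intro divide_left_mono)
      have "real r \<le> real r ^ r"
        using \<open>2 \<le> r\<close> by (intro self_le_power) auto
      then show "2 \<le> real r ^ r"
        using \<open>2 \<le> r\<close> by linarith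
    qed auto
    ultimately show ?thesis
      by (intro exI[of _ "centroid P"]) linarith
  qed
  then show ?thesis
    unfolding \<rho>_def by simp
qed

end
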